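(* Let $F$ be a minimally unsatisfiable clause-set with no 1-singular variables. Then the sets of variables of maximal singular tuples for $F$ are exactly the minimal transversals of the singularity hypergraph $\mathrm{shyp}(F)$ (the inclusion-minimal sets of vertices meeting every hyperedge), and the maximal singular tuples for $F$ are exactly the arbitrary linear orderings of these minimal transversals.
   Context: Literals are variables $v$ and complements $\overline{v}$; a clause is a finite set of literals with no complementary pair; a clause-set is a finite set of clauses; $\mathrm{var}(F)$ is the set of variables of $F$ and $\mathrm{var}(L)$ the set of variables underlying a literal set $L$; $\mathrm{ldeg}_F(x)$ is the number of clauses of $F$ containing literal $x$. $\mathrm{DP}_v(F) := \{C \in F : v \notin \mathrm{var}(C)\} \cup \{(C \cup D)\setminus\{v,\overline{v}\} : C, D \in F,\ C \cap \overline{D} = \{v\}\}$; $\mathrm{DP}_{v_1,\dots,v_k}(F)$ applies these in order. A variable $v$ is singular for $F$ if $\min(\mathrm{ldeg}_F(v),\mathrm{ldeg}_F(\overline{v}))=1$; it is 1-singular if $\mathrm{ldeg}_F(v)=\mathrm{ldeg}_F(\overline{v})=1$; $F$ is nonsingular if it has no singular variables. For minimally unsatisfiable $F$, a tuple $(v_1,\dots,v_n)$ is a singular tuple for $F$ if each $v_i$ is singular for $\mathrm{DP}_{v_1,\dots,v_{i-1}}(F)$, and it is maximal if $\mathrm{DP}_{v_1,\dots,v_n}(F)$ is nonsingular. When $F$ has no 1-singular variables, each singular variable $v$ has a unique singular literal $x_v$ (the literal of $v$ with $\mathrm{ldeg}_F(x_v)=1$); let $L$ be the set of these. The singularity hypergraph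 $\mathrm{shyp}(F)$ has vertex set $\mathrm{var}(F)$ and hyperedges $\mathrm{var}(C\cap L)$ for all $C\in F$ with $C\cap L\neq\emptyset$. *)

theory Defs
  imports Main
begin

datatype 'a lit = Pos 'a | Neg 'a

fun lvar :: "'a lit \<Rightarrow> 'a" where
  "lvar (Pos v) = v" | "lvar (Neg v) = v"

fun comp :: "'a lit \<Rightarrow> 'a lit" where
  "comp (Pos v) = Neg v" | "comp (Neg v) = Pos v"

definition clause :: "'a lit set \<Rightarrow> bool" where
  "clause C \<longleftrightarrow> finite C \<and> (\<forall>x\<in>C. comp x \<notin> C)"

definition clause_set :: "'a lit set set \<Rightarrow> bool" where
  "clause_set F \<longleftrightarrow> finite F \<and> (\<forall>C\<in>F. clause C)"

definition var_cl :: "'a lit set \<Rightarrow> 'a set" where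
  "var_cl C = lvar ` C"

definition var_cs :: "'a lit set set \<Rightarrow> 'a set" where
  "var_cs F = (\<Union>C\<in>F. var_cl C)"

fun lit_val :: "('a \<Rightarrow> bool) \<Rightarrow> 'a lit \<Rightarrow> bool" where
  "lit_val \<phi> (Pos v) = \<phi> v" | "lit_val \<phi> (Neg v) = (\<not> \<phi> v)"

definition satisfiable :: "'a lit set set \<Rightarrow> bool" where
  "satisfiable F \<longleftrightarrow> (\<exists>\<phi>. \<forall>C\<in>F. \<exists>x\<in>C. lit_val \<phi> x)"

definition min_unsat :: "'a lit set set \<Rightarrow> bool" where
  "min_unsat F \<longleftrightarrow> clause_set F \<and> \<not> satisfiable F \<and> (\<forall>G. G \<subset> F \<longrightarrow> satisfiable G)"

definition ldeg :: "'a lit set set \<Rightarrow> 'a lit \<Rightarrow> nat" where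
  "ldeg F x = card {C \<in> F. x \<in> C}"

definition DP :: "'a \<Rightarrow> 'a lit set set \<Rightarrow> 'a lit set set" where
  "DP v F = {C \<in> F. v \<notin> var_cl C} \<union>
     {(C \<union> D) - {Pos v, Neg v} | C D. C \<in> F \<and> D \<in> F \<and> C \<inter> comp ` D = {Pos v}}"

fun DP_seq :: "'a list \<Rightarrow> 'a lit set set \<Rightarrow> 'a lit set set" where
  "DP_seq [] F = F"
| "DP_seq (v # vs) F = DP_seq vs (DP v F)"

definition singular :: "'a lit set set \<Rightarrow> 'a \<Rightarrow> bool" where
  "singular F v \<longleftrightarrow> min (ldeg F (Pos v)) (ldeg F (Neg v)) = 1"

definition one_singular :: "'a lit set set \<Rightarrow> 'a \<Rightarrow> bool" where
  "one_singular F v \<longleftrightarrow> ldeg F (Pos v) = 1 \<and> ldeg F (Neg v) = 1"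

definition nonsingular :: "'a lit set set \<Rightarrow> bool" where
  "nonsingular F \<longleftrightarrow> (\<forall>v. \<not> singular F v)"

definition singular_tuple :: "'a lit set set \<Rightarrow> 'a list \<Rightarrow> bool" where
  "singular_tuple F vs \<longleftrightarrow> (\<forall>i < length vs. singular (DP_seq (take i vs) F) (vs ! i))"

definition max_singular_tuple :: "'a lit set set \<Rightarrow> 'a list \<Rightarrow> bool" where
  "max_singular_tuple F vs \<longleftrightarrow> singular_tuple F vs \<and> nonsingular (DP_seq vs F)"

definition sing_lits :: "'a lit set set \<Rightarrow> 'a lit set" where
  "sing_lits F = {x. singular F (lvar x) \<and> ldeg F x = 1}"

definition shyp :: "'a lit set set \<Rightarrow> 'a set \<times> 'a set set" where
  "shyp F = (var_cs F,
     {var_cl (C \<inter> sing_lits F) | C. C \<in> F \<and> C \<inter> sing_lits F \<noteq> {}})"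

definition transversal :: "'a set \<times> 'a set set \<Rightarrow> 'a set \<Rightarrow> bool" where
  "transversal H T \<longleftrightarrow> T \<subseteq> fst H \<and> (\<forall>E\<in>snd H. T \<inter> E \<noteq> {})"

definition min_transversals :: "'a set \<times> 'a set set \<Rightarrow> 'a set set" where
  "min_transversals H = {T. transversal H T \<and> (\<forall>T'. T' \<subset> T \<longrightarrow> \<not> transversal H T')}"

end

theory Submission
  imports Defs
begin

text \<open>
  Without 1-singular variables every singular variable has exactly one singular literal, and that
  literal occurs in exactly one clause. Hence the hyperedges of the singularity hypergraph are
  pairwise disjoint and their union is the set of singular variables. Eliminating a singular
  variable by DP resolves its unique clause \<open>C\<close> with all clauses containing the complementary
  literal; the result is again minimally unsatisfiable without 1-singular variables, and its
  singularity hypergraph arises by deleting the hyperedge coming from \<open>C\<close>. So singular tuples are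
  the sequences of distinct variables taken from distinct hyperedges, they are maximal iff they meet
  every hyperedge, and for pairwise disjoint hyperedges these are precisely the minimal transversals.
\<close>

definition partial_transversal :: "'b set set \<Rightarrow> 'b set \<Rightarrow> bool" where
  "partial_transversal P T \<longleftrightarrow> T \<subseteq> \<Union>P \<and> (\<forall>B\<in>P. \<forall>a\<in>B \<inter> T. \<forall>b\<in>B \<inter> T. a = b)"

lemma partial_transversal_insert_iff:
  assumes "pairwise disjnt P" "B \<in> P" "v \<in> B"
  shows "v \<notin> T \<and> partial_transversal P (insert v T) \<longleftrightarrow> partial_transversal (P - {B}) T"
proof -
  have other_blocks: "v \<notin> B'" if "B' \<in> P" "B' \<noteq> B" for B'
    using assms that by (auto simp: pairwise_def disjnt_def)
  show ?thesis
  proof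
    assume "v \<notin> T \<and> partial_transversal P (insert v T)"
    then have "B \<inter> T = {}"
      using assms(2,3) by (auto simp: partial_transversal_def)
    with \<open>v \<notin> T \<and> partial_transversal P (insert v T)\<close> show "partial_transversal (P - {B}) T"
      unfolding partial_transversal_def by blast
  next
    assume pt: "partial_transversal (P - {B}) T"
    then have "B \<inter> T = {}"
      using assms(1,2) by (fastforce simp: partial_transversal_def pairwise_def disjnt_def)
    show "v \<notin> T \<and> partial_transversal P (insert v T)"
      unfolding partial_transversal_def
    proof (intro conjI ballI)
      show "v \<notin> T"
        using \<open>B \<inter> T = {}\<close> assms(3) by blast
      show "insert v T \<subseteq> \<Union>P"
        using pt assms(2,3) by (auto simp: partial_transversal_def)
      fix B' a b
      assume "B' \<in> P" "a \<in> B' \<inter> insert v T" "b \<in> B' \<inter> insert v T"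
      then show "a = b"
        using pt \<open>B \<inter> T = {}\<close> other_blocks[of B']
        by (cases "B' = B") (auto simp: partial_transversal_def)
    qed
  qed
qed

lemma hits_all_insert_iff:
  assumes "pairwise disjnt P" "B \<in> P" "v \<in> B"
  shows "(\<forall>B'\<in>P. insert v T \<inter> B' \<noteq> {}) \<longleftrightarrow> (\<forall>B'\<in>P - {B}. T \<inter> B' \<noteq> {})"
proof -
  have "v \<notin> B'" if "B' \<in> P" "B' \<noteq> B" for B'
    using assms that by (auto simp: pairwise_def disjnt_def)
  then show ?thesis
    using assms(2,3) by auto
qed

lemma min_transversal_imp_partial_transversal:
  assumes "pairwise disjnt (snd H)" "T \<in> min_transversals H"
  shows "partial_transversal (snd H) T"
proof -
  have trans: "transversal H T"
    using assms(2) by (simp add: min_transversals_def)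
  then have hits: "\<forall>B\<in>snd H. T \<inter> B \<noteq> {}"
    by (simp add: transversal_def)
  have not_transversal: "\<not> transversal H (T - {t})" if "t \<in> T" for t
    using assms(2) that unfolding min_transversals_def by blast
  have "t \<in> \<Union>(snd H)" if "t \<in> T" for t
  proof (rule ccontr)
    assume "t \<notin> \<Union>(snd H)"
    then have "transversal H (T - {t})"
      using trans unfolding transversal_def by blast
    with not_transversal \<open>t \<in> T\<close> show False by blast
  qed
  moreover have "a = b" if "B \<in> snd H" "a \<in> B \<inter> T" "b \<in> B \<inter> T" for B a b
  proof (rule ccontr)
    assume "a \<noteq> b"
    have "(T - {a}) \<inter> B' \<noteq> {}" if "B' \<in> snd H" for B'
    proof (cases "a \<in> B'")
      case True
      then have "B' = B"
        using assms(1) \<open>B' \<in> snd H\<close> \<open>B \<in> snd H\<close> \<open>a \<in> B \<inter> T\<close>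
        by (auto simp: pairwise_def disjnt_def)
      then show ?thesis
        using \<open>b \<in> B \<inter> T\<close> \<open>a \<noteq> b\<close> by blast
    next
      case False
      then show ?thesis
        using hits that by blast
    qed
    then have "transversal H (T - {a})"
      using trans unfolding transversal_def by blast
    with not_transversal \<open>a \<in> B \<inter> T\<close> show False by blast
  qed
  ultimately show ?thesis
    by (auto simp: partial_transversal_def)
qed

lemma partial_transversal_imp_min_transversal:
  assumes "\<Union>(snd H) \<subseteq> fst H" "partial_transversal (snd H) T" "\<forall>B\<in>snd H. T \<inter> B \<noteq> {}"
  shows "T \<in> min_transversals H"
proof -
  have "transversal H T"
    using assms by (auto simp: transversal_def partial_transversal_def)
  moreover have "\<not> transversal H T'" if "T' \<subset> T" for T'
  proof
    assume "transversal H T'"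
    obtain t where "t \<in> T" "t \<notin> T'"
      using \<open>T' \<subset> T\<close> by blast
    then obtain B where "B \<in> snd H" "t \<in> B"
      using assms(2) by (auto simp: partial_transversal_def)
    then obtain t' where "t' \<in> B \<inter> T'"
      using \<open>transversal H T'\<close> by (auto simp: transversal_def)
    then have "t' = t"
      using assms(2) \<open>B \<in> snd H\<close> \<open>t \<in> B\<close> \<open>t \<in> T\<close> \<open>T' \<subset> T\<close>
      by (auto simp: partial_transversal_def)
    with \<open>t' \<in> B \<inter> T'\<close> \<open>t \<notin> T'\<close> show False by blast
  qed
  ultimately show ?thesis
    by (simp add: min_transversals_def)
qed

lemma min_transversals_disjoint_iff:
  assumes "pairwise disjnt (snd H)" "\<Union>(snd H) \<subseteq> fst H"
  shows "T \<in> min_transversals H \<longleftrightarrow>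
    partial_transversal (snd H) T \<and> (\<forall>B\<in>snd H. T \<inter> B \<noteq> {})"
proof
  assume min: "T \<in> min_transversals H"
  then have "transversal H T"
    by (simp add: min_transversals_def)
  then show "partial_transversal (snd H) T \<and> (\<forall>B\<in>snd H. T \<inter> B \<noteq> {})"
    using min_transversal_imp_partial_transversal[OF assms(1) min] by (simp add: transversal_def)
next
  assume "partial_transversal (snd H) T \<and> (\<forall>B\<in>snd H. T \<inter> B \<noteq> {})"
  then show "T \<in> min_transversals H"
    using partial_transversal_imp_min_transversal[OF assms(2)] by blast
qed


lemma comp_comp [simp]: "comp (comp x) = x"
  by (cases x) auto

lemma lvar_comp [simp]: "lvar (comp x) = lvar x"
  by (cases x) auto

lemma comp_neq [simp]: "comp x \<noteq> x" "x \<noteq> comp x"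
  by (cases x; simp)+

lemma lit_val_comp [simp]: "lit_val \<phi> (comp x) = (\<not> lit_val \<phi> x)"
  by (cases x) auto

lemma lvar_eq_iff: "lvar y = lvar x \<longleftrightarrow> y = x \<or> y = comp x"
  by (cases x; cases y) auto

lemma in_comp_image_iff: "y \<in> comp ` A \<longleftrightarrow> comp y \<in> A"
  by (metis comp_comp image_iff)

lemma lit_val_fun_upd:
  "lit_val (\<phi>(v := b)) y = (if lvar y = v then lit_val (\<lambda>_. b) y else lit_val \<phi> y)"
  by (cases y) simp_all

lemma var_cl_iff: "v \<in> var_cl E \<longleftrightarrow> Pos v \<in> E \<or> Neg v \<in> E"
proof
  assume "v \<in> var_cl E"
  then obtain y where "y \<in> E" "lvar y = v"
    by (auto simp: var_cl_def)
  then show "Pos v \<in> E \<or> Neg v \<in> E"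
    by (cases y) auto
next
  assume "Pos v \<in> E \<or> Neg v \<in> E"
  then show "v \<in> var_cl E"
    unfolding var_cl_def by (metis image_eqI lvar.simps)
qed

lemma var_cl_lvar_iff: "lvar x \<in> var_cl E \<longleftrightarrow> x \<in> E \<or> comp x \<in> E"
  by (cases x) (auto simp: var_cl_iff)

lemma clash_comp_swap: "A \<inter> comp ` B = {y} \<Longrightarrow> B \<inter> comp ` A = {comp y}"
proof -
  have "B \<inter> comp ` A = comp ` (A \<inter> comp ` B)"
    by (auto simp: in_comp_image_iff)
  then show "A \<inter> comp ` B = {y} \<Longrightarrow> B \<inter> comp ` A = {comp y}" by simp
qed

lemma clash_singletonI:
  assumes "y \<in> A" "comp y \<in> B" "\<And>z. z \<in> A \<Longrightarrow> comp z \<in> B \<Longrightarrow> z = y"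
  shows "A \<inter> comp ` B = {y}"
proof (rule set_eqI)
  fix z
  have "z \<in> comp ` B \<longleftrightarrow> comp z \<in> B"
    by (rule in_comp_image_iff)
  then show "z \<in> A \<inter> comp ` B \<longleftrightarrow> z \<in> {y}"
    using assms by blast
qed

lemma resolvents_comp_swap:
  "{(C \<union> D) - S | C D. C \<in> F \<and> D \<in> F \<and> C \<inter> comp ` D = {y}}
   = {(C \<union> D) - S | C D. C \<in> F \<and> D \<in> F \<and> C \<inter> comp ` D = {comp y}}"
proof -
  have "{(C \<union> D) - S | C D. C \<in> F \<and> D \<in> F \<and> C \<inter> comp ` D = {y}}
     \<subseteq> {(C \<union> D) - S | C D. C \<in> F \<and> D \<in> F \<and> C \<inter> comp ` D = {comp y}}" for y :: "'a lit"
  proof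
    fix E assume "E \<in> {(C \<union> D) - S | C D. C \<in> F \<and> D \<in> F \<and> C \<inter> comp ` D = {y}}"
    then obtain C D where CD: "E = (C \<union> D) - S" "C \<in> F" "D \<in> F" "C \<inter> comp ` D = {y}"
      by blast
    then have "E = (D \<union> C) - S" "D \<inter> comp ` C = {comp y}"
      using clash_comp_swap[OF CD(4)] by (simp_all add: Un_commute)
    with CD(2,3) show "E \<in> {(C \<union> D) - S | C D. C \<in> F \<and> D \<in> F \<and> C \<inter> comp ` D = {comp y}}"
      by blast
  qed
  from this[of y] this[of "comp y"] show ?thesis by simp
qed

lemma DP_lvar:
  "DP (lvar x) F = {C \<in> F. x \<notin> C \<and> comp x \<notin> C} \<union>
     {(C \<union> D) - {x, comp x} | C D. C \<in> F \<and> D \<in> F \<and> C \<inter> comp ` D = {x}}"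
proof (cases x)
  case (Pos v)
  then show ?thesis
    unfolding DP_def var_cl_lvar_iff by (simp add: insert_commute)
next
  case (Neg v)
  then show ?thesis
    unfolding DP_def var_cl_lvar_iff
    using resolvents_comp_swap[of "{Neg v, Pos v}" F "Pos v"] by (simp add: insert_commute)
qed

lemma clause_resolvent:
  assumes "clause C" "clause D" "C \<inter> comp ` D = {y}"
  shows "clause ((C \<union> D) - {y, comp y})"
proof -
  have "comp z \<notin> (C \<union> D) - {y, comp y}" if "z \<in> (C \<union> D) - {y, comp y}" for z
  proof
    assume "comp z \<in> (C \<union> D) - {y, comp y}"
    with that assms(1,2) have "z \<in> C \<inter> comp ` D \<or> comp z \<in> C \<inter> comp ` D"
      by (auto simp: clause_def in_comp_image_iff)
    then have "z = y \<or> z = comp y"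
      unfolding assms(3) by (metis comp_comp singletonD)
    with that show False by simp
  qed
  with assms(1,2) show ?thesis by (simp add: clause_def)
qed

lemma clause_set_DP:
  assumes "clause_set F"
  shows "clause_set (DP v F)"
proof -
  have "DP v F \<subseteq> F \<union> (\<lambda>(C, D). (C \<union> D) - {Pos v, Neg v}) ` (F \<times> F)"
    by (auto simp: DP_def)
  then have "finite (DP v F)"
    using assms by (auto simp: clause_set_def intro: finite_subset)
  moreover have "clause E" if "E \<in> DP v F" for E
    using that assms clause_resolvent[of _ _ "Pos v"] by (auto simp: DP_def clause_set_def)
  ultimately show ?thesis by (simp add: clause_set_def)
qed

lemma clash_of_falsified_clauses:
  assumes "\<forall>z\<in>A. \<not> lit_val (\<phi>(v := False)) z" "\<forall>z\<in>B. \<not> lit_val (\<phi>(v := True)) z"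
    and "Pos v \<in> A" "Neg v \<in> B"
  shows "A \<inter> comp ` B = {Pos v}"
proof (rule clash_singletonI)
  show "Pos v \<in> A" "comp (Pos v) \<in> B"
    using assms(3,4) by simp_all
  show "z = Pos v" if "z \<in> A" "comp z \<in> B" for z
  proof (cases "lvar z = v")
    case True
    then show ?thesis
      using assms(1) that(1) by (cases z) auto
  next
    case False
    have "\<not> lit_val \<phi> z"
      using assms(1) that(1) False by (auto simp: lit_val_fun_upd)
    moreover have "\<not> lit_val \<phi> (comp z)"
      using assms(2) that(2) False by (auto simp: lit_val_fun_upd)
    ultimately show ?thesis by simp
  qed
qed

text \<open>If neither value of \<open>v\<close> extends a model of \<open>DP v F\<close> to \<open>F\<close>, the two clauses
  witnessing this clash only in \<open>v\<close>, and their resolvent is falsified.\<close>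
lemma satisfiable_DP_imp_satisfiable:
  assumes "satisfiable (DP v F)"
  shows "satisfiable F"
proof (rule ccontr)
  assume unsat: "\<not> satisfiable F"
  obtain \<phi> where \<phi>: "\<forall>E\<in>DP v F. \<exists>z\<in>E. lit_val \<phi> z"
    using assms by (auto simp: satisfiable_def)
  have falsified: "\<exists>E\<in>F. \<forall>z\<in>E. \<not> lit_val (\<phi>(v := b)) z" for b
    using unsat by (auto simp: satisfiable_def)
  then obtain A B where A: "A \<in> F" "\<forall>z\<in>A. \<not> lit_val (\<phi>(v := False)) z"
    and B: "B \<in> F" "\<forall>z\<in>B. \<not> lit_val (\<phi>(v := True)) z"
    by blast
  have occurs: "v \<in> var_cl E" if "E \<in> F" "\<forall>z\<in>E. \<not> lit_val (\<phi>(v := b)) z" for E b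
  proof (rule ccontr)
    assume "v \<notin> var_cl E"
    then have "E \<in> DP v F" "\<forall>z\<in>E. lvar z \<noteq> v"
      using that(1) by (auto simp: DP_def var_cl_def)
    with \<phi> that(2) show False
      by (auto simp: lit_val_fun_upd)
  qed
  have "Pos v \<in> A" "Neg v \<in> B"
    using occurs[OF A] occurs[OF B] A(2) B(2) by (auto simp: var_cl_iff)
  then have "(A \<union> B) - {Pos v, Neg v} \<in> DP v F"
    using A B clash_of_falsified_clauses[OF A(2) B(2)] by (auto simp: DP_def)
  then obtain z where z: "z \<in> A \<union> B" "z \<notin> {Pos v, Neg v}" "lit_val \<phi> z"
    using \<phi> by blast
  then have "lvar z \<noteq> v"
    by (cases z) auto
  with z A(2) B(2) show False
    by (auto simp: lit_val_fun_upd)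
qed

lemma min_unsat_not_satisfiable: "min_unsat F \<Longrightarrow> \<not> satisfiable F"
  by (simp add: min_unsat_def)

lemma min_unsat_clause_set: "min_unsat F \<Longrightarrow> clause_set F"
  by (simp add: min_unsat_def)

lemma finite_var_cs: "clause_set F \<Longrightarrow> finite (var_cs F)"
  by (auto simp: clause_set_def clause_def var_cs_def var_cl_def)

lemma min_unsat_finite: "min_unsat F \<Longrightarrow> finite F"
  by (simp add: min_unsat_def clause_set_def)

lemma min_unsat_critical_assignment:
  assumes "min_unsat F" "D \<in> F"
  obtains \<phi> where "\<forall>E\<in>F - {D}. \<exists>z\<in>E. lit_val \<phi> z" "\<forall>z\<in>D. \<not> lit_val \<phi> z"
proof -
  have "satisfiable (F - {D})"
    using assms by (auto simp: min_unsat_def)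
  then obtain \<phi> where \<phi>: "\<forall>E\<in>F - {D}. \<exists>z\<in>E. lit_val \<phi> z"
    by (auto simp: satisfiable_def)
  moreover have "\<forall>z\<in>D. \<not> lit_val \<phi> z"
  proof (rule ccontr)
    assume "\<not> (\<forall>z\<in>D. \<not> lit_val \<phi> z)"
    then have "\<forall>E\<in>F. \<exists>z\<in>E. lit_val \<phi> z"
      using \<phi> by blast
    then show False
      using min_unsat_not_satisfiable[OF assms(1)] unfolding satisfiable_def by blast
  qed
  ultimately show thesis using that by blast
qed

lemma ldeg_pos_iff:
  assumes "finite F"
  shows "1 \<le> ldeg F y \<longleftrightarrow> (\<exists>E\<in>F. y \<in> E)"
  using assms by (auto simp: ldeg_def Suc_le_eq card_gt_0_iff)

lemma singular_lvar_iff: "singular F (lvar y) \<longleftrightarrow> min (ldeg F y) (ldeg F (comp y)) = 1"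
  by (cases y) (auto simp: singular_def min.commute)

lemma one_singular_lvar_iff: "one_singular F (lvar y) \<longleftrightarrow> ldeg F y = 1 \<and> ldeg F (comp y) = 1"
  by (cases y) (auto simp: one_singular_def)

lemma sing_lits_iff: "y \<in> sing_lits F \<longleftrightarrow> ldeg F y = 1 \<and> 1 \<le> ldeg F (comp y)"
  unfolding sing_lits_def using singular_lvar_iff[of F y] by (auto simp: min_def)

lemma singular_iff_sing_lit: "singular F v \<longleftrightarrow> (\<exists>y\<in>sing_lits F. lvar y = v)"
proof
  assume "singular F v"
  then have "Pos v \<in> sing_lits F \<or> Neg v \<in> sing_lits F"
    by (auto simp: singular_def sing_lits_iff min_def split: if_splits)
  then show "\<exists>y\<in>sing_lits F. lvar y = v"
    by force
qed (auto simp: sing_lits_def)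

lemma sing_lit_clause_unique:
  assumes "y \<in> sing_lits F" "E1 \<in> F" "y \<in> E1" "E2 \<in> F" "y \<in> E2"
  shows "E1 = E2"
proof -
  have "card {E \<in> F. y \<in> E} = 1"
    using assms(1) by (simp add: sing_lits_iff ldeg_def)
  then obtain E where E: "{E \<in> F. y \<in> E} = {E}"
    by (rule card_1_singletonE)
  have "E1 \<in> {E \<in> F. y \<in> E}" "E2 \<in> {E \<in> F. y \<in> E}"
    using assms(2-5) by simp_all
  then show ?thesis
    unfolding E by simp
qed

lemma sing_lit_occurs:
  assumes "finite F" "y \<in> sing_lits F"
  shows "\<exists>E\<in>F. y \<in> E"
  using assms ldeg_pos_iff[OF assms(1), of y] by (simp add: sing_lits_iff)

lemma sing_lits_inj_on_lvar:
  assumes "\<forall>w. \<not> one_singular F w"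
  shows "inj_on lvar (sing_lits F)"
proof (rule inj_onI, rule ccontr)
  fix y1 y2
  assume "y1 \<in> sing_lits F" "y2 \<in> sing_lits F" "lvar y1 = lvar y2" "y1 \<noteq> y2"
  then have "one_singular F (lvar y1)"
    by (auto simp: lvar_eq_iff one_singular_lvar_iff sing_lits_iff)
  with assms show False by blast
qed

lemma shyp_edge_clause_unique:
  assumes "\<forall>w. \<not> one_singular F w" "E1 \<in> F" "E2 \<in> F"
    and "var_cl (E1 \<inter> sing_lits F) \<inter> var_cl (E2 \<inter> sing_lits F) \<noteq> {}"
  shows "E1 = E2"
proof -
  obtain y1 y2 where y: "y1 \<in> E1 \<inter> sing_lits F" "y2 \<in> E2 \<inter> sing_lits F" "lvar y1 = lvar y2"
    using assms(4) by (auto simp: var_cl_def)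
  then have "y1 = y2"
    using sing_lits_inj_on_lvar[OF assms(1)] by (auto dest: inj_onD)
  with y assms(2,3) show ?thesis
    using sing_lit_clause_unique by blast
qed

lemma shyp_edges_disjoint:
  assumes "\<forall>w. \<not> one_singular F w"
  shows "pairwise disjnt (snd (shyp F))"
  using shyp_edge_clause_unique[OF assms]
  by (fastforce simp: pairwise_def disjnt_def shyp_def)

lemma Union_shyp_edges:
  assumes "finite F"
  shows "\<Union> (snd (shyp F)) = {v. singular F v}"
proof -
  have "v \<in> \<Union> (snd (shyp F)) \<longleftrightarrow> (\<exists>y\<in>sing_lits F. lvar y = v \<and> (\<exists>E\<in>F. y \<in> E))" for v
    by (auto simp: shyp_def var_cl_def)
  then show ?thesis
    using sing_lit_occurs[OF assms] by (auto simp: singular_iff_sing_lit)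
qed

lemma shyp_edges_subset_vertices: "\<Union> (snd (shyp F)) \<subseteq> fst (shyp F)"
  by (auto simp: shyp_def var_cs_def var_cl_def)

lemma empty_notin_shyp_edges: "{} \<notin> snd (shyp F)"
  by (auto simp: shyp_def var_cl_def)

locale singular_elimination =
  fixes F :: "'a lit set set" and x :: "'a lit" and C :: "'a lit set"
  assumes F_min_unsat: "min_unsat F"
    and no_one_singular: "\<forall>w. \<not> one_singular F w"
    and x_sing_lit: "x \<in> sing_lits F"
    and clauses_with_x: "{E \<in> F. x \<in> E} = {C}"
begin

definition elim :: "'a lit set \<Rightarrow> 'a lit set" where
  "elim E = (if comp x \<in> E then (C \<union> E) - {x, comp x} else E)"

lemma finite_F: "finite F"
  using min_unsat_finite[OF F_min_unsat] .

lemma comp_notin_clause: "E \<in> F \<Longrightarrow> z \<in> E \<Longrightarrow> comp z \<notin> E"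
  using min_unsat_clause_set[OF F_min_unsat] by (auto simp: clause_set_def clause_def)

lemma C_in_F: "C \<in> F" and x_in_C: "x \<in> C"
  using clauses_with_x by auto

lemma eq_C_if_x_in: "E \<in> F \<Longrightarrow> x \<in> E \<Longrightarrow> E = C"
  using clauses_with_x by auto

lemma comp_x_notin_C: "comp x \<notin> C"
  using comp_notin_clause[OF C_in_F x_in_C] .

lemma two_le_card_comp_x_clauses: "2 \<le> card {D \<in> F. comp x \<in> D}"
proof -
  have "ldeg F x = 1" "1 \<le> ldeg F (comp x)"
    using x_sing_lit by (auto simp: sing_lits_iff)
  moreover have "\<not> one_singular F (lvar x)"
    using no_one_singular by blast
  ultimately show ?thesis
    by (simp add: one_singular_lvar_iff ldeg_def)
qed

lemma comp_x_notin_sing_lits: "comp x \<notin> sing_lits F"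
  using two_le_card_comp_x_clauses by (simp add: sing_lits_iff ldeg_def)

text \<open>Making \<open>x\<close> false would then satisfy \<open>F\<close>.\<close>
lemma C_satisfied_only_by_x:
  assumes "\<forall>E\<in>F - {C}. comp x \<notin> E \<longrightarrow> (\<exists>w\<in>E. lit_val \<phi> w)"
    and "z \<in> C" "z \<noteq> x" "lit_val \<phi> z"
  shows False
proof -
  define \<psi> where "\<psi> = \<phi>(lvar x := lit_val (\<lambda>_. False) x)"
  have \<psi>: "lit_val \<psi> w = (if w = x then False else if w = comp x then True else lit_val \<phi> w)" for w
    unfolding \<psi>_def lit_val_fun_upd lvar_eq_iff by (cases x) auto
  have "\<exists>w\<in>E. lit_val \<psi> w" if E: "E \<in> F" for E
  proof (cases "comp x \<in> E")
    case True
    then show ?thesis by (auto simp: \<psi>)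
  next
    case False
    show ?thesis
    proof (cases "E = C")
      case True
      then show ?thesis
        using assms(2-4) comp_x_notin_C by (auto simp: \<psi>)
    next
      case E_ne_C: False
      then obtain w where "w \<in> E" "lit_val \<phi> w"
        using assms(1) E False by blast
      moreover have "w \<noteq> x"
        using \<open>w \<in> E\<close> E E_ne_C eq_C_if_x_in by blast
      ultimately show ?thesis
        using False by (auto simp: \<psi>)
    qed
  qed
  then have "satisfiable F"
    by (auto simp: satisfiable_def)
  with min_unsat_not_satisfiable[OF F_min_unsat] show False ..
qed

lemma clash_with_C:
  assumes "D \<in> F" "comp x \<in> D"
  shows "C \<inter> comp ` D = {x}"
proof (rule clash_singletonI)
  show "x \<in> C" "comp x \<in> D"
    using x_in_C assms(2) by simp_all
  show "z = x" if "z \<in> C" "comp z \<in> D" for z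
  proof (rule ccontr)
    assume "z \<noteq> x"
    obtain \<phi> where \<phi>: "\<forall>E\<in>F - {D}. \<exists>w\<in>E. lit_val \<phi> w" "\<forall>w\<in>D. \<not> lit_val \<phi> w"
      using min_unsat_critical_assignment[OF F_min_unsat assms(1)] .
    have "lit_val \<phi> z"
      using \<phi>(2)[rule_format, OF that(2)] by simp
    moreover have "\<forall>E\<in>F - {C}. comp x \<notin> E \<longrightarrow> (\<exists>w\<in>E. lit_val \<phi> w)"
      using \<phi>(1) assms(2) by blast
    ultimately show False
      using C_satisfied_only_by_x that(1) \<open>z \<noteq> x\<close> by blast
  qed
qed

lemma DP_eq_elim_image: "DP (lvar x) F = elim ` (F - {C})"
proof
  show "DP (lvar x) F \<subseteq> elim ` (F - {C})"
  proof
    fix E assume "E \<in> DP (lvar x) F"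
    then consider "E \<in> F" "x \<notin> E" "comp x \<notin> E"
      | A D where "A \<in> F" "D \<in> F" "A \<inter> comp ` D = {x}" "E = (A \<union> D) - {x, comp x}"
      unfolding DP_lvar by blast
    then show "E \<in> elim ` (F - {C})"
    proof cases
      case 1
      then show ?thesis
        using x_in_C by (force simp: elim_def)
    next
      case 2
      then have "x \<in> A \<inter> comp ` D"
        by simp
      then have "x \<in> A" "comp x \<in> D"
        by (simp_all add: in_comp_image_iff)
      then have "A = C" "D \<noteq> C"
        using 2 eq_C_if_x_in comp_x_notin_C by auto
      then show ?thesis
        using 2 \<open>comp x \<in> D\<close> by (force simp: elim_def)
    qed
  qed
next
  show "elim ` (F - {C}) \<subseteq> DP (lvar x) F"
  proof
    fix E assume "E \<in> elim ` (F - {C})"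
    then obtain D where D: "D \<in> F" "D \<noteq> C" "E = elim D"
      by blast
    then have "x \<notin> D"
      using eq_C_if_x_in by blast
    then show "E \<in> DP (lvar x) F"
      using D C_in_F clash_with_C[OF D(1)] unfolding DP_lvar elim_def by auto
  qed
qed

lemma elim_subset: "elim E \<subseteq> C \<union> E"
  by (auto simp: elim_def)

lemma elim_superset: "E - {x, comp x} \<subseteq> elim E"
  by (auto simp: elim_def)

lemma x_comp_x_notin_elim:
  assumes "E \<in> F - {C}"
  shows "x \<notin> elim E" "comp x \<notin> elim E"
  using assms eq_C_if_x_in by (auto simp: elim_def)

lemma not_subset_C_Un_comp_x_clause:
  assumes "A \<in> F" "comp x \<in> A" "B \<in> F - {C}" "B \<noteq> A"
  shows "\<not> B - {x, comp x} \<subseteq> C \<union> A"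
proof
  assume sub: "B - {x, comp x} \<subseteq> C \<union> A"
  obtain \<phi> where \<phi>: "\<forall>E\<in>F - {A}. \<exists>w\<in>E. lit_val \<phi> w" "\<forall>w\<in>A. \<not> lit_val \<phi> w"
    using min_unsat_critical_assignment[OF F_min_unsat assms(1)] .
  then obtain w where w: "w \<in> B" "lit_val \<phi> w"
    using assms(3,4) by blast
  then have "w \<notin> A" "w \<noteq> comp x"
    using \<phi>(2) assms(2) by auto
  moreover have "w \<noteq> x"
    using w(1) assms(3) eq_C_if_x_in by blast
  ultimately have "w \<in> C" "w \<noteq> x"
    using sub w(1) by auto
  moreover have "\<forall>E\<in>F - {C}. comp x \<notin> E \<longrightarrow> (\<exists>w\<in>E. lit_val \<phi> w)"
    using \<phi>(1) assms(2) by blast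
  ultimately show False
    using C_satisfied_only_by_x w(2) by blast
qed

lemma inj_on_elim: "inj_on elim (F - {C})"
proof (rule inj_onI)
  fix A B
  assume A: "A \<in> F - {C}" and B: "B \<in> F - {C}" and eq: "elim A = elim B"
  have resolved: "A' = B'"
    if "A' \<in> F - {C}" "B' \<in> F - {C}" "elim A' = elim B'" "comp x \<in> A'" for A' B'
  proof (rule ccontr)
    assume "A' \<noteq> B'"
    have "B' - {x, comp x} \<subseteq> elim B'"
      by (rule elim_superset)
    also have "\<dots> = elim A'"
      using that(3) by simp
    also have "\<dots> \<subseteq> C \<union> A'"
      by (rule elim_subset)
    finally show False
      using not_subset_C_Un_comp_x_clause that \<open>A' \<noteq> B'\<close> by blast
  qed
  consider "comp x \<in> A" | "comp x \<in> B" | "comp x \<notin> A" "comp x \<notin> B"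
    by blast
  then show "A = B"
  proof cases
    case 1
    then show ?thesis using resolved[OF A B eq] by blast
  next
    case 2
    then show ?thesis using resolved[OF B A eq[symmetric]] by blast
  next
    case 3
    then show ?thesis using eq by (simp add: elim_def)
  qed
qed

lemma ldeg_DP:
  "ldeg (DP (lvar x) F) y = card {E \<in> F - {C}. y \<in> elim E}"
proof -
  have "{E' \<in> DP (lvar x) F. y \<in> E'} = elim ` {E \<in> F - {C}. y \<in> elim E}"
    unfolding DP_eq_elim_image by blast
  moreover have "inj_on elim {E \<in> F - {C}. y \<in> elim E}"
    using inj_on_elim by (rule inj_on_subset) blast
  ultimately show ?thesis
    by (simp add: ldeg_def card_image)
qed

lemma ldeg_DP_lvar:
  assumes "lvar y = lvar x"
  shows "ldeg (DP (lvar x) F) y = 0"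
proof -
  have "{E \<in> F - {C}. y \<in> elim E} = {}"
    using assms x_comp_x_notin_elim by (auto simp: lvar_eq_iff)
  then show ?thesis
    by (simp only: ldeg_DP card.empty)
qed

lemma ldeg_DP_notin_C:
  assumes "y \<notin> C" "lvar y \<noteq> lvar x"
  shows "ldeg (DP (lvar x) F) y = ldeg F y"
proof -
  have "{E \<in> F - {C}. y \<in> elim E} = {E \<in> F. y \<in> E}"
    using assms elim_subset elim_superset C_in_F by (fastforce simp: lvar_eq_iff)
  then show ?thesis
    using ldeg_DP[of y] by (simp add: ldeg_def)
qed

lemma ldeg_DP_in_C:
  assumes "y \<in> C" "y \<noteq> x"
  shows "2 \<le> ldeg (DP (lvar x) F) y"
proof -
  have "{D \<in> F. comp x \<in> D} \<subseteq> {E \<in> F - {C}. y \<in> elim E}"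
    using assms comp_x_notin_C comp_neq by (auto simp: elim_def)
  then have "card {D \<in> F. comp x \<in> D} \<le> card {E \<in> F - {C}. y \<in> elim E}"
    using finite_F by (intro card_mono) auto
  then show ?thesis
    using two_le_card_comp_x_clauses by (simp add: ldeg_DP)
qed

lemma sing_lits_DP: "sing_lits (DP (lvar x) F) = sing_lits F - C"
proof (rule set_eqI)
  fix y
  consider "lvar y = lvar x" | "lvar y \<noteq> lvar x" "y \<in> C" | "lvar y \<noteq> lvar x" "y \<notin> C"
    by blast
  then show "y \<in> sing_lits (DP (lvar x) F) \<longleftrightarrow> y \<in> sing_lits F - C"
  proof cases
    case 1
    then have "y = x \<or> y = comp x"
      by (simp add: lvar_eq_iff)
    then show ?thesis
      using ldeg_DP_lvar[OF 1] x_in_C comp_x_notin_sing_lits by (auto simp: sing_lits_iff)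
  next
    case 2
    then have "2 \<le> ldeg (DP (lvar x) F) y"
      using ldeg_DP_in_C by blast
    with 2 show ?thesis
      by (simp add: sing_lits_iff)
  next
    case 3
    have "1 \<le> ldeg (DP (lvar x) F) (comp y) \<longleftrightarrow> 1 \<le> ldeg F (comp y)"
    proof (cases "comp y \<in> C")
      case True
      then show ?thesis
        using 3 ldeg_DP_in_C[of "comp y"] ldeg_pos_iff[OF finite_F] C_in_F by force
    next
      case False
      then show ?thesis
        using 3 ldeg_DP_notin_C[of "comp y"] by simp
    qed
    then show ?thesis
      using 3 ldeg_DP_notin_C[of y] by (simp add: sing_lits_iff)
  qed
qed

lemma no_one_singular_DP: "\<forall>w. \<not> one_singular (DP (lvar x) F) w"
proof (intro allI notI)
  fix w
  assume "one_singular (DP (lvar x) F) w"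
  then have deg: "ldeg (DP (lvar x) F) y = 1" if "y \<in> {Pos w, Neg w}" for y
    using that by (auto simp: one_singular_def)
  then have "lvar y \<noteq> lvar x" "y \<notin> C" if "y \<in> {Pos w, Neg w}" for y
    using that ldeg_DP_lvar[of y] ldeg_DP_in_C[of y] x_in_C by force+
  then have "one_singular F w"
    using deg ldeg_DP_notin_C by (simp add: one_singular_def)
  with no_one_singular show False by blast
qed

lemma elim_satisfied:
  assumes "B \<in> F - {C}" "\<exists>w\<in>B. lit_val \<phi> w" "\<exists>w\<in>C. lit_val \<phi> w"
  shows "\<exists>w\<in>elim B. lit_val \<phi> w"
proof (cases "comp x \<in> B")
  case False
  then show ?thesis
    using assms(2) by (simp add: elim_def)
next
  case True
  then have elim_B: "elim B = (C \<union> B) - {x, comp x}"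
    by (simp add: elim_def)
  show ?thesis
  proof (cases "lit_val \<phi> x")
    case True
    moreover have "x \<notin> B"
      using assms(1) eq_C_if_x_in by blast
    ultimately show ?thesis
      using assms(2) unfolding elim_B by fastforce
  next
    case False
    then show ?thesis
      using assms(3) comp_x_notin_C unfolding elim_B by fastforce
  qed
qed

lemma min_unsat_DP: "min_unsat (DP (lvar x) F)"
proof -
  have "\<not> satisfiable (DP (lvar x) F)"
    using min_unsat_not_satisfiable[OF F_min_unsat] satisfiable_DP_imp_satisfiable[of "lvar x" F]
    by blast
  moreover have "satisfiable G" if G: "G \<subset> DP (lvar x) F" for G
  proof -
    obtain A where A: "A \<in> F - {C}" "elim A \<notin> G"
      using G unfolding DP_eq_elim_image by blast
    have "satisfiable (F - {A})"
      using F_min_unsat A(1) by (auto simp: min_unsat_def)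
    then obtain \<phi> where \<phi>: "\<forall>E\<in>F - {A}. \<exists>w\<in>E. lit_val \<phi> w"
      by (auto simp: satisfiable_def)
    then have "\<exists>w\<in>elim B. lit_val \<phi> w" if "B \<in> F - {C}" "B \<noteq> A" for B
      using that A(1) C_in_F by (intro elim_satisfied) auto
    then have "\<forall>E\<in>G. \<exists>w\<in>E. lit_val \<phi> w"
      using G A unfolding DP_eq_elim_image by blast
    then show ?thesis
      by (auto simp: satisfiable_def)
  qed
  moreover have "clause_set (DP (lvar x) F)"
    using clause_set_DP min_unsat_clause_set[OF F_min_unsat] .
  ultimately show ?thesis
    by (simp add: min_unsat_def)
qed

lemma elim_inter_sing_lits:
  assumes "E \<in> F - {C}"
  shows "elim E \<inter> sing_lits (DP (lvar x) F) = E \<inter> sing_lits F"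
proof -
  have "E \<inter> sing_lits F \<inter> C = {}"
    using assms C_in_F sing_lit_clause_unique[of _ F E C] by blast
  then show ?thesis
    unfolding sing_lits_DP using elim_subset[of E] elim_superset[of E] x_in_C comp_x_notin_sing_lits
    by blast
qed

lemma shyp_edges_DP_eq_image:
  "snd (shyp (DP (lvar x) F)) = (\<lambda>E. var_cl (E \<inter> sing_lits F)) ` {E \<in> F - {C}. E \<inter> sing_lits F \<noteq> {}}"
  (is "_ = ?rhs")
proof -
  define G where "G = DP (lvar x) F"
  have mem_G: "E' \<in> G \<longleftrightarrow> (\<exists>E\<in>F - {C}. E' = elim E)" for E'
    unfolding G_def DP_eq_elim_image by blast
  have "snd (shyp G) = {var_cl (E' \<inter> sing_lits G) | E'. E' \<in> G \<and> E' \<inter> sing_lits G \<noteq> {}}"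
    by (simp add: shyp_def)
  also have "\<dots> = ?rhs"
  proof (intro equalityI subsetI)
    fix X
    assume "X \<in> {var_cl (E' \<inter> sing_lits G) | E'. E' \<in> G \<and> E' \<inter> sing_lits G \<noteq> {}}"
    then obtain E where E: "E \<in> F - {C}" "X = var_cl (elim E \<inter> sing_lits G)"
        "elim E \<inter> sing_lits G \<noteq> {}"
      by (auto simp: mem_G)
    then show "X \<in> ?rhs"
      using elim_inter_sing_lits[folded G_def, OF E(1)] by auto
  next
    fix X
    assume "X \<in> ?rhs"
    then obtain E where E: "E \<in> F - {C}" "X = var_cl (E \<inter> sing_lits F)" "E \<inter> sing_lits F \<noteq> {}"
      by auto
    then have "elim E \<in> G" "X = var_cl (elim E \<inter> sing_lits G)" "elim E \<inter> sing_lits G \<noteq> {}"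
      using elim_inter_sing_lits[folded G_def, OF E(1)] mem_G by auto
    then show "X \<in> {var_cl (E' \<inter> sing_lits G) | E'. E' \<in> G \<and> E' \<inter> sing_lits G \<noteq> {}}"
      by blast
  qed
  finally show ?thesis
    unfolding G_def .
qed

lemma shyp_edges_DP:
  "snd (shyp (DP (lvar x) F)) = snd (shyp F) - {var_cl (C \<inter> sing_lits F)}"
proof -
  let ?edge = "\<lambda>E. var_cl (E \<inter> sing_lits F)"
  have "?edge E \<noteq> ?edge C" if "E \<in> F - {C}" "E \<inter> sing_lits F \<noteq> {}" for E
  proof
    assume eq: "?edge E = ?edge C"
    have "?edge E \<noteq> {}"
      using that(2) by (simp add: var_cl_def)
    then have "?edge E \<inter> ?edge C \<noteq> {}"
      unfolding eq by simp
    then show False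
      using shyp_edge_clause_unique[OF no_one_singular _ C_in_F] that(1) by blast
  qed
  then have "?edge ` {E \<in> F - {C}. E \<inter> sing_lits F \<noteq> {}}
      = ?edge ` {E \<in> F. E \<inter> sing_lits F \<noteq> {}} - {?edge C}"
    by auto
  also have "\<dots> = snd (shyp F) - {?edge C}"
    by (auto simp: shyp_def)
  finally show ?thesis
    unfolding shyp_edges_DP_eq_image .
qed

end

lemma singular_elimination_step:
  assumes "min_unsat F" "\<forall>w. \<not> one_singular F w" "singular F v"
  obtains B where "v \<in> B" "B \<in> snd (shyp F)"
    "min_unsat (DP v F)" "\<forall>w. \<not> one_singular (DP v F) w"
    "snd (shyp (DP v F)) = snd (shyp F) - {B}"
proof -
  obtain x where x: "x \<in> sing_lits F" "lvar x = v"
    using assms(3) by (auto simp: singular_iff_sing_lit)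
  then have "ldeg F x = 1"
    by (simp add: sing_lits_iff)
  then obtain C where "{E \<in> F. x \<in> E} = {C}"
    unfolding ldeg_def by (rule card_1_singletonE)
  then interpret singular_elimination F x C
    using assms(1,2) x(1) by unfold_locales
  show thesis
  proof (rule that)
    show "v \<in> var_cl (C \<inter> sing_lits F)"
      using x x_in_C by (auto simp: var_cl_def)
    show "var_cl (C \<inter> sing_lits F) \<in> snd (shyp F)"
      using C_in_F x_in_C x(1) by (auto simp: shyp_def)
  qed (use min_unsat_DP no_one_singular_DP shyp_edges_DP x(2) in simp_all)
qed

lemma singular_tuple_Cons_iff:
  "singular_tuple F (v # vs) \<longleftrightarrow> singular F v \<and> singular_tuple (DP v F) vs"
  unfolding singular_tuple_def by (simp add: All_less_Suc2)

lemma singular_tuple_iff_partial_transversal: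
  assumes "min_unsat F" "\<forall>w. \<not> one_singular F w"
  shows "singular_tuple F vs \<longleftrightarrow> distinct vs \<and> partial_transversal (snd (shyp F)) (set vs)"
  using assms
proof (induction vs arbitrary: F)
  case Nil
  then show ?case
    by (simp add: singular_tuple_def partial_transversal_def)
next
  case (Cons v vs)
  have finite_F: "finite F"
    using Cons.prems(1) by (rule min_unsat_finite)
  show ?case
  proof (cases "singular F v")
    case False
    then show ?thesis
      using Union_shyp_edges[OF finite_F]
      by (auto simp: singular_tuple_Cons_iff partial_transversal_def)
  next
    case True
    then obtain B where B: "v \<in> B" "B \<in> snd (shyp F)"
        "min_unsat (DP v F)" "\<forall>w. \<not> one_singular (DP v F) w"
        "snd (shyp (DP v F)) = snd (shyp F) - {B}"
      using singular_elimination_step[OF Cons.prems] by blast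
    have "singular_tuple F (v # vs) \<longleftrightarrow> singular_tuple (DP v F) vs"
      using True by (simp add: singular_tuple_Cons_iff)
    also have "\<dots> \<longleftrightarrow> distinct vs \<and> partial_transversal (snd (shyp F) - {B}) (set vs)"
      using Cons.IH[OF B(3,4)] B(5) by simp
    also have "\<dots> \<longleftrightarrow> distinct (v # vs) \<and> partial_transversal (snd (shyp F)) (set (v # vs))"
      using partial_transversal_insert_iff[OF shyp_edges_disjoint[OF Cons.prems(2)] B(2,1), of "set vs"]
      by auto
    finally show ?thesis .
  qed
qed

lemma nonsingular_DP_seq_iff_hits_all:
  assumes "min_unsat F" "\<forall>w. \<not> one_singular F w" "singular_tuple F vs"
  shows "nonsingular (DP_seq vs F) \<longleftrightarrow> (\<forall>B\<in>snd (shyp F). set vs \<inter> B \<noteq> {})"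
  using assms
proof (induction vs arbitrary: F)
  case Nil
  have finite_F: "finite F"
    using Nil.prems(1) by (rule min_unsat_finite)
  have "nonsingular F \<longleftrightarrow> \<Union>(snd (shyp F)) = {}"
    using Union_shyp_edges[OF finite_F] by (auto simp: nonsingular_def)
  also have "\<dots> \<longleftrightarrow> snd (shyp F) = {}"
    using empty_notin_shyp_edges[of F] by auto
  finally show ?case
    by auto
next
  case (Cons v vs)
  then have "singular F v" "singular_tuple (DP v F) vs"
    by (simp_all add: singular_tuple_Cons_iff)
  then obtain B where B: "v \<in> B" "B \<in> snd (shyp F)"
      "min_unsat (DP v F)" "\<forall>w. \<not> one_singular (DP v F) w"
      "snd (shyp (DP v F)) = snd (shyp F) - {B}"
    using singular_elimination_step[OF Cons.prems(1,2)] by blast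
  show ?case
    using Cons.IH[OF B(3,4) \<open>singular_tuple (DP v F) vs\<close>]
      hits_all_insert_iff[OF shyp_edges_disjoint[OF Cons.prems(2)] B(2,1), of "set vs"]
    by (simp add: B(5))
qed

lemma max_singular_tuple_iff:
  assumes "min_unsat F" "\<forall>w. \<not> one_singular F w"
  shows "max_singular_tuple F vs \<longleftrightarrow> distinct vs \<and> set vs \<in> min_transversals (shyp F)"
  using singular_tuple_iff_partial_transversal[OF assms, of vs]
    nonsingular_DP_seq_iff_hits_all[OF assms, of vs]
    min_transversals_disjoint_iff[OF shyp_edges_disjoint[OF assms(2)] shyp_edges_subset_vertices,
      of "set vs"]
  unfolding max_singular_tuple_def by blast

theorem lemma57:
  fixes F :: "'a lit set set"
  assumes "min_unsat F"
    and "\<forall>v. \<not> one_singular F v"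
  shows "{set vs | vs. max_singular_tuple F vs} = min_transversals (shyp F)
       \<and> {vs. max_singular_tuple F vs} = {vs. distinct vs \<and> set vs \<in> min_transversals (shyp F)}"
proof
  have "finite T" if "T \<in> min_transversals (shyp F)" for T
  proof (rule finite_subset)
    show "T \<subseteq> var_cs F"
      using that by (simp add: min_transversals_def transversal_def shyp_def)
    show "finite (var_cs F)"
      using finite_var_cs[OF min_unsat_clause_set[OF assms(1)]] .
  qed
  then show "{set vs | vs. max_singular_tuple F vs} = min_transversals (shyp F)"
    using max_singular_tuple_iff[OF assms] by (auto dest: finite_distinct_list)
  show "{vs. max_singular_tuple F vs} = {vs. distinct vs \<and> set vs \<in> min_transversals (shyp F)}"
    using max_singular_tuple_iff[OF assms] by blast
qed

end
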